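(* Consider any finite set of votes published so far. Let $H$ be a set of validators holding at least $\frac23$ of the total deposit such that no validator in $H$ has violated slashing condition I or II, and such that the source of every vote previously published by a validator in $H$ is a justified checkpoint (with respect to the current set of published votes). Let $a$ be a justified checkpoint of maximal height, and let $B$ be the maximum of $h(a)$ and the heights of all targets of all votes published so far by any validator. Suppose $a'$ is a descendant of $a$ with $h(a')=B+1$ and $a''$ is a direct child of $a'$. If every validator in $H$ additionally publishes the two votes with (source, target) $=(a,a')$ and $(a',a'')$, then no validator in $H$ violates slashing condition I or II, and $a'$ becomes finalized.
   Context: Checkpoints form a rooted tree (the checkpoint tree) with root $r$. For a checkpoint $c$, its height $h(c)$ is the number of edges on the path from $c$ to $r$, so $h(r)=0$ and a child has height one more than its parent. There is a fixed finite set of validators, each with a positive deposit; fractions of validators are always deposit-weighted. A vote is a signed message $\langle \nu, s, t, h(s), h(t)\rangle$ from validator $\nu$, where $s$ (source) and $t$ (target) are checkpoints and $s$ is a strict ancestor of $t$. A supermajority link $s\to t$ is an ordered pair of checkpoints such that validators holding at least $\frac23$ of the total deposit have published the vote with source $s$ and target $t$. A checkpoint $c$ is justified if $c=r$ or there is a supermajority link $c'\to c$ with $c'$ justified. A checkpoint $c$ is finalized if $c=r$, or $c$ is justified and there is a supermajority link $c\to c'$ where $c'$ is a direct child of $c$. Slashing conditions: a validator $\nu$ violates a slashing condition if it publishes two distinct votes $\langle \nu,s_1,t_1,h(s_1),h(t_1)\rangle$ and $\langle \nu,s_2,t_2,h(s_2),h(t_2)\rangle$ such that either (I) $h(t_1)=h(t_2)$,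 or (II) $h(s_1)<h(s_2)<h(t_2)<h(t_1)$. *)

theory Defs
  imports Complex_Main
begin

text \<open>A rooted tree on a type of checkpoints 'c is given by a root r and a parent
  function par; by convention par r = r (the root has no genuine parent).\<close>

definition is_tree :: "('c \<Rightarrow> 'c) \<Rightarrow> 'c \<Rightarrow> bool" where
  "is_tree par r \<longleftrightarrow> par r = r \<and> (\<forall>c. \<exists>n. (par ^^ n) c = r)"

definition height :: "('c \<Rightarrow> 'c) \<Rightarrow> 'c \<Rightarrow> 'c \<Rightarrow> nat" where
  "height par r c = (LEAST n. (par ^^ n) c = r)"

definition ancestor :: "('c \<Rightarrow> 'c) \<Rightarrow> 'c \<Rightarrow> 'c \<Rightarrow> 'c \<Rightarrow> bool" where
  "ancestor par r s t \<longleftrightarrow> (\<exists>n. n \<le> height par r t \<and> (par ^^ n) t = s)"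

definition strict_ancestor :: "('c \<Rightarrow> 'c) \<Rightarrow> 'c \<Rightarrow> 'c \<Rightarrow> 'c \<Rightarrow> bool" where
  "strict_ancestor par r s t \<longleftrightarrow> (\<exists>n. 0 < n \<and> n \<le> height par r t \<and> (par ^^ n) t = s)"

definition is_child :: "('c \<Rightarrow> 'c) \<Rightarrow> 'c \<Rightarrow> 'c \<Rightarrow> 'c \<Rightarrow> bool" where
  "is_child par r c' c \<longleftrightarrow> c' \<noteq> r \<and> par c' = c"

text \<open>A vote \<langle>v, s, t, h(s), h(t)\<rangle> is represented by the triple (v, s, t);
  the heights are determined by s and t.  A set of published votes is a
  set of such triples.\<close>

type_synonym ('v, 'c) vote = "'v \<times> 'c \<times> 'c"

definition valid_vote :: "('c \<Rightarrow> 'c) \<Rightarrow> 'c \<Rightarrow> 'v set \<Rightarrow> ('v, 'c) vote \<Rightarrow> bool" where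
  "valid_vote par r V x \<longleftrightarrow> (case x of (v, s, t) \<Rightarrow> v \<in> V \<and> strict_ancestor par r s t)"

definition weight :: "'v set \<Rightarrow> ('v \<Rightarrow> real) \<Rightarrow> 'v set \<Rightarrow> real" where
  "weight V dep S = (\<Sum>v \<in> S \<inter> V. dep v)"

definition sm_link :: "'v set \<Rightarrow> ('v \<Rightarrow> real) \<Rightarrow> ('v, 'c) vote set \<Rightarrow> 'c \<Rightarrow> 'c \<Rightarrow> bool" where
  "sm_link V dep P s t \<longleftrightarrow> weight V dep {v. (v, s, t) \<in> P} \<ge> 2/3 * weight V dep V"

inductive justified :: "'c \<Rightarrow> 'v set \<Rightarrow> ('v \<Rightarrow> real) \<Rightarrow> ('v, 'c) vote set \<Rightarrow> 'c \<Rightarrow> bool"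
  for r V dep P where
  root: "justified r V dep P r"
| link: "justified r V dep P c' \<Longrightarrow> sm_link V dep P c' c \<Longrightarrow> justified r V dep P c"

definition finalized :: "('c \<Rightarrow> 'c) \<Rightarrow> 'c \<Rightarrow> 'v set \<Rightarrow> ('v \<Rightarrow> real) \<Rightarrow> ('v, 'c) vote set \<Rightarrow> 'c \<Rightarrow> bool" where
  "finalized par r V dep P c \<longleftrightarrow> c = r \<or>
     (justified r V dep P c \<and> (\<exists>c'. is_child par r c' c \<and> sm_link V dep P c c'))"

definition slashed :: "('c \<Rightarrow> 'c) \<Rightarrow> 'c \<Rightarrow> ('v, 'c) vote set \<Rightarrow> 'v \<Rightarrow> bool" where
  "slashed par r P v \<longleftrightarrow> (\<exists>s1 t1 s2 t2. (v, s1, t1) \<in> P \<and> (v, s2, t2) \<in> P \<and> (s1, t1) \<noteq> (s2, t2) \<and>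
      (height par r t1 = height par r t2 \<or>
       (height par r s1 < height par r s2 \<and> height par r s2 < height par r t2
        \<and> height par r t2 < height par r t1)))"

end

theory Submission
  imports Defs
begin

text \<open>Every earlier vote of an honest validator has source height at most h(a), since its
  source is justified, and target height at most B < h(a').  So the new vote (a, a') has a
  target strictly above all earlier targets and a source no lower than any earlier source;
  hence it neither repeats a target height nor surrounds or is surrounded by an earlier vote,
  and the same holds for (a', a'') one level higher.  Finality is immediate: the honest
  validators alone form a supermajority on both new links, and justification is monotone in
  the set of votes.\<close>

lemma weight_mono:
  assumes "S \<subseteq> T" "finite V" "\<forall>v\<in>V. dep v > 0"
  shows "weight V dep S \<le> weight V dep T"
  unfolding weight_def by (rule sum_mono2) (use assms in \<open>auto intro: less_imp_le\<close>)

lemma sm_link_if_voters: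
  assumes "finite V" "\<forall>v\<in>V. dep v > 0"
    and "weight V dep S \<ge> 2/3 * weight V dep V"
    and "\<And>v. v \<in> S \<Longrightarrow> (v, s, t) \<in> P"
  shows "sm_link V dep P s t"
proof -
  have "weight V dep S \<le> weight V dep {v. (v, s, t) \<in> P}"
    using assms by (intro weight_mono) auto
  with assms(3) show ?thesis unfolding sm_link_def by linarith
qed

lemma justified_mono:
  assumes "justified r V dep P c" "P \<subseteq> Q" "finite V" "\<forall>v\<in>V. dep v > 0"
  shows "justified r V dep Q c"
  using assms(1)
proof (induction rule: justified.induct)
  case root
  show ?case by (rule justified.root)
next
  case (link c' c)
  have "weight V dep {v. (v, c', c) \<in> P} \<le> weight V dep {v. (v, c', c) \<in> Q}"
    using assms(2-4) by (intro weight_mono) auto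
  with link.hyps(2) have "sm_link V dep Q c' c" unfolding sm_link_def by linarith
  with link.IH show ?case by (rule justified.link)
qed

lemma height_child:
  assumes tree: "is_tree par r" and child: "is_child par r c' c"
  shows "height par r c' = Suc (height par r c)"
proof -
  from tree obtain n where n: "(par ^^ n) c' = r" unfolding is_tree_def by blast
  have "(par ^^ 0) c' \<noteq> r" using child unfolding is_child_def by simp
  then have "(LEAST n. (par ^^ n) c' = r) = Suc (LEAST m. (par ^^ Suc m) c' = r)"
    using n by (rule_tac Least_Suc) auto
  moreover have "\<And>m. (par ^^ Suc m) c' = (par ^^ m) c"
    using child unfolding is_child_def by (simp only: funpow_Suc_right comp_def)
  ultimately show ?thesis unfolding height_def by simp
qed

lemma slashed_own_votes_mono:
  assumes "slashed par r Q v" "\<And>s t. (v, s, t) \<in> Q \<Longrightarrow> (v, s, t) \<in> P"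
  shows "slashed par r P v"
  using assms unfolding slashed_def by blast

lemma not_slashed_add_votes:
  assumes not_slashed: "\<not> slashed par r P v"
    and old_votes: "\<And>s t. (v, s, t) \<in> P \<Longrightarrow>
                      height par r s \<le> height par r a \<and> height par r t < height par r a'"
    and "height par r a < height par r a'" "height par r a' < height par r a''"
  shows "\<not> slashed par r (P \<union> {(w, a, a') | w. w \<in> H} \<union> {(w, a', a'') | w. w \<in> H}) v"
proof
  let ?h = "height par r"
  assume "slashed par r (P \<union> {(w, a, a') | w. w \<in> H} \<union> {(w, a', a'') | w. w \<in> H}) v"
  then have "slashed par r (P \<union> {(v, a, a'), (v, a', a'')}) v"
    by (rule slashed_own_votes_mono) auto
  then obtain s1 t1 s2 t2
    where votes: "(v, s1, t1) \<in> P \<union> {(v, a, a'), (v, a', a'')}"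
                 "(v, s2, t2) \<in> P \<union> {(v, a, a'), (v, a', a'')}"
      and distinct: "(s1, t1) \<noteq> (s2, t2)"
      and conflict: "?h t1 = ?h t2 \<or> (?h s1 < ?h s2 \<and> ?h s2 < ?h t2 \<and> ?h t2 < ?h t1)"
    unfolding slashed_def by blast
  show False
  proof (cases "(v, s1, t1) \<in> P \<and> (v, s2, t2) \<in> P")
    case True
    with distinct conflict not_slashed show False unfolding slashed_def by blast
  next
    case False
    with votes distinct conflict old_votes assms(3,4) show False by fastforce
  qed
qed

lemma finalized_add_supermajority_votes:
  assumes finV: "finite V" and dep_pos: "\<forall>v\<in>V. dep v > 0"
    and H_weight: "weight V dep H \<ge> 2/3 * weight V dep V"
    and a_just: "justified r V dep P a" and a''_child: "is_child par r a'' a'"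
  shows "finalized par r V dep (P \<union> {(v, a, a') | v. v \<in> H} \<union> {(v, a', a'') | v. v \<in> H}) a'"
proof -
  define P' where "P' = P \<union> {(v, a, a') | v. v \<in> H} \<union> {(v, a', a'') | v. v \<in> H}"
  have "justified r V dep P' a'"
  proof (rule justified.link)
    show "justified r V dep P' a"
      by (rule justified_mono[OF a_just _ finV dep_pos]) (auto simp: P'_def)
    show "sm_link V dep P' a a'"
      by (rule sm_link_if_voters[OF finV dep_pos H_weight]) (auto simp: P'_def)
  qed
  moreover have "sm_link V dep P' a' a''"
    by (rule sm_link_if_voters[OF finV dep_pos H_weight]) (auto simp: P'_def)
  ultimately show ?thesis
    using a''_child unfolding P'_def finalized_def by blast
qed

theorem theorem2:
  fixes par :: "'c \<Rightarrow> 'c" and r :: 'c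
    and V :: "'v set" and dep :: "'v \<Rightarrow> real"
    and P :: "('v, 'c) vote set" and H :: "'v set"
    and a a' a'' :: 'c and B :: nat
  assumes tree: "is_tree par r"
    and finV: "finite V" and dep_pos: "\<forall>v\<in>V. dep v > 0"
    and finP: "finite P" and validP: "\<forall>x\<in>P. valid_vote par r V x"
    and HV: "H \<subseteq> V"
    and H_weight: "weight V dep H \<ge> 2/3 * weight V dep V"
    and H_honest: "\<forall>v\<in>H. \<not> slashed par r P v"
    and H_src: "\<forall>v\<in>H. \<forall>s t. (v, s, t) \<in> P \<longrightarrow> justified r V dep P s"
    and a_just: "justified r V dep P a"
    and a_max: "\<forall>c. justified r V dep P c \<longrightarrow> height par r c \<le> height par r a"
    and B_def: "B = Max ({height par r a} \<union> {height par r t | v s t. (v, s, t) \<in> P})"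
    and a'_desc: "ancestor par r a a'" and a'_height: "height par r a' = B + 1"
    and a''_child: "is_child par r a'' a'"
  shows "(\<forall>v\<in>H. \<not> slashed par r (P \<union> {(v, a, a') | v. v \<in> H} \<union> {(v, a', a'') | v. v \<in> H}) v)
       \<and> finalized par r V dep (P \<union> {(v, a, a') | v. v \<in> H} \<union> {(v, a', a'') | v. v \<in> H}) a'"
proof -
  let ?h = "height par r"
  have "{?h t | v s t. (v, s, t) \<in> P} = (\<lambda>x. ?h (snd (snd x))) ` P" by force
  then have heights_finite: "finite ({?h a} \<union> {?h t | v s t. (v, s, t) \<in> P})"
    using finP by simp
  have a_below: "?h a < ?h a'"
    using Max_ge[OF heights_finite] unfolding a'_height B_def by (simp add: less_Suc_eq_le)
  have targets_below: "?h t < ?h a'" if "(v, s, t) \<in> P" for v s t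
  proof -
    have "?h t \<le> B"
      unfolding B_def using that by (intro Max_ge[OF heights_finite]) blast
    then show ?thesis unfolding a'_height by simp
  qed
  have "\<not> slashed par r (P \<union> {(v, a, a') | v. v \<in> H} \<union> {(v, a', a'') | v. v \<in> H}) v"
    if v: "v \<in> H" for v
  proof (rule not_slashed_add_votes)
    show "\<not> slashed par r P v" using v H_honest by blast
    show "?h s \<le> ?h a \<and> ?h t < ?h a'" if "(v, s, t) \<in> P" for s t
      using that v H_src a_max targets_below by blast
    show "?h a < ?h a'" by (fact a_below)
    show "?h a' < ?h a''" using height_child[OF tree a''_child] by simp
  qed
  with finalized_add_supermajority_votes[OF finV dep_pos H_weight a_just a''_child]
  show ?thesis by blast
qed

end
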